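(* $N\otimes-$ is a functor on $\mathsf{SquaMS}$: for every square metric space $X$, the quotient distance on $N\otimes X$ is a metric, $(N\otimes X,S_{N\otimes X})$ is a square metric space, and for every morphism $f$ of $\mathsf{SquaMS}$, $N\otimes f$ is a morphism of $\mathsf{SquaMS}$, with identities and composition preserved.
   Context: Let $M_0=\{(r,s)\in[0,1]^2: r\in\{0,1\}\text{ or } s\in\{0,1\}\}$. A square metric space is a pair $(X,S_X)$ with $X$ a metric space with all distances at most $2$ and $S_X\colon M_0\to X$ injective such that (sq1) for $i\in\{0,1\}$, $r,s\in[0,1]$: $d_X(S_X(i,r),S_X(i,s))=|s-r|$ and $d_X(S_X(r,i),S_X(s,i))=|s-r|$; (sq2) $d_X(S_X(r,s),S_X(t,u))\ge|r-t|+|s-u|$. $\mathsf{SquaMS}$: these objects, with short maps $f$ satisfying $f\circ S_X=S_Y$ as morphisms. Let $N=\{0,1,2\}^2$, also viewed as points of $\mathbb{R}^2$. For $X$ in $\mathsf{SquaMS}$, $N\otimes X=(N\times X)/\!\sim$, where $\sim$ is the equivalence relation generated by $(m,S_X(p))\sim(n,S_X(q))$ whenever $m,n\in N$ differ by exactly $1$ in exactly one coordinate and $(m+p)/3=(n+q)/3$ in $\mathbb{R}^2$; $n\otimes x$ is the class of $(n,x)$. On $N\times X$ put $d((a,u),(b,v))=\frac13 d_X(u,v)$ if $a=b$ and $2$ otherwise; the quotient distance is the infimum over finite sequences from $(m,x)$ to $(n,y)$ in $N\times X$ of the sum over consecutive pairs of $0$ if $\sim$-related and the distance otherwise. $S_{N\otimes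 X}(p)=n\otimes S_X(3p-n)$ for any $n\in N$ with $p\in(n+[0,1]^2)/3$, and $(N\otimes f)(n\otimes x)=n\otimes f(x)$. *)

theory Defs
  imports "HOL-Analysis.Analysis"
begin

definition M0 :: "(real \<times> real) set" where
  "M0 = {(r, s). r \<in> {0..1} \<and> s \<in> {0..1} \<and> (r \<in> {0, 1} \<or> s \<in> {0, 1})}"

definition square_ms :: "'a set \<Rightarrow> ('a \<Rightarrow> 'a \<Rightarrow> real) \<Rightarrow> (real \<times> real \<Rightarrow> 'a) \<Rightarrow> bool" where
  "square_ms X d S \<longleftrightarrow>
     Metric_space X d \<and> (\<forall>x\<in>X. \<forall>y\<in>X. d x y \<le> 2) \<and>
     S ` M0 \<subseteq> X \<and> inj_on S M0 \<and>
     (\<forall>i\<in>{0, 1}. \<forall>r\<in>{0..1}. \<forall>s\<in>{0..1}.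
        d (S (i, r)) (S (i, s)) = \<bar>s - r\<bar> \<and> d (S (r, i)) (S (s, i)) = \<bar>s - r\<bar>) \<and>
     (\<forall>p\<in>M0. \<forall>q\<in>M0. d (S p) (S q) \<ge> \<bar>fst p - fst q\<bar> + \<bar>snd p - snd q\<bar>)"

definition sqms_mor ::
  "'a set \<Rightarrow> ('a \<Rightarrow> 'a \<Rightarrow> real) \<Rightarrow> (real \<times> real \<Rightarrow> 'a) \<Rightarrow>
   'b set \<Rightarrow> ('b \<Rightarrow> 'b \<Rightarrow> real) \<Rightarrow> (real \<times> real \<Rightarrow> 'b) \<Rightarrow> ('a \<Rightarrow> 'b) \<Rightarrow> bool" where
  "sqms_mor X d S Y e T f \<longleftrightarrow>
     f ` X \<subseteq> Y \<and> (\<forall>x\<in>X. \<forall>y\<in>X. e (f x) (f y) \<le> d x y) \<and> (\<forall>p\<in>M0. f (S p) = T p)"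

definition NN :: "(int \<times> int) set" where
  "NN = {0, 1, 2} \<times> {0, 1, 2}"

definition adj :: "int \<times> int \<Rightarrow> int \<times> int \<Rightarrow> bool" where
  "adj m n \<longleftrightarrow> (fst m = fst n \<and> \<bar>snd m - snd n\<bar> = 1) \<or> (snd m = snd n \<and> \<bar>fst m - fst n\<bar> = 1)"

definition tgen :: "(real \<times> real \<Rightarrow> 'a) \<Rightarrow> ((int \<times> int) \<times> 'a) rel" where
  "tgen S = {((m, S p), (n, S q)) | m n p q.
      m \<in> NN \<and> n \<in> NN \<and> adj m n \<and> p \<in> M0 \<and> q \<in> M0 \<and>
      real_of_int (fst m) + fst p = real_of_int (fst n) + fst q \<and>
      real_of_int (snd m) + snd p = real_of_int (snd n) + snd q}"

definition teq :: "'a set \<Rightarrow> (real \<times> real \<Rightarrow> 'a) \<Rightarrow> ((int \<times> int) \<times> 'a) rel" where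
  "teq X S = {(u, v). u \<in> NN \<times> X \<and> v \<in> NN \<times> X \<and> (u, v) \<in> (tgen S \<union> (tgen S)\<inverse>)\<^sup>*}"

text \<open>Carrier of N \<otimes> X and the class n \<otimes> x.\<close>
definition tensor :: "'a set \<Rightarrow> (real \<times> real \<Rightarrow> 'a) \<Rightarrow> ((int \<times> int) \<times> 'a) set set" where
  "tensor X S = (NN \<times> X) // teq X S"

definition tclass :: "'a set \<Rightarrow> (real \<times> real \<Rightarrow> 'a) \<Rightarrow> (int \<times> int) \<times> 'a \<Rightarrow> ((int \<times> int) \<times> 'a) set" where
  "tclass X S a = teq X S `` {a}"

definition tstep :: "'a set \<Rightarrow> ('a \<Rightarrow> 'a \<Rightarrow> real) \<Rightarrow> (real \<times> real \<Rightarrow> 'a) \<Rightarrow>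
    (int \<times> int) \<times> 'a \<Rightarrow> (int \<times> int) \<times> 'a \<Rightarrow> real" where
  "tstep X d S u v =
     (if (u, v) \<in> teq X S then 0 else if fst u = fst v then d (snd u) (snd v) / 3 else 2)"

definition tcost :: "'a set \<Rightarrow> ('a \<Rightarrow> 'a \<Rightarrow> real) \<Rightarrow> (real \<times> real \<Rightarrow> 'a) \<Rightarrow>
    ((int \<times> int) \<times> 'a) list \<Rightarrow> real" where
  "tcost X d S zs = (\<Sum>i < length zs - 1. tstep X d S (zs ! i) (zs ! Suc i))"

definition qd :: "'a set \<Rightarrow> ('a \<Rightarrow> 'a \<Rightarrow> real) \<Rightarrow> (real \<times> real \<Rightarrow> 'a) \<Rightarrow>
    (int \<times> int) \<times> 'a \<Rightarrow> (int \<times> int) \<times> 'a \<Rightarrow> real" where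
  "qd X d S a b = Inf {tcost X d S zs | zs. zs \<noteq> [] \<and> hd zs = a \<and> last zs = b \<and> set zs \<subseteq> NN \<times> X}"

text \<open>Induced distance on classes (set to 0 outside the carrier, a HOL totality convention).\<close>
definition tensor_dist :: "'a set \<Rightarrow> ('a \<Rightarrow> 'a \<Rightarrow> real) \<Rightarrow> (real \<times> real \<Rightarrow> 'a) \<Rightarrow>
    ((int \<times> int) \<times> 'a) set \<Rightarrow> ((int \<times> int) \<times> 'a) set \<Rightarrow> real" where
  "tensor_dist X d S A B =
     (if A \<in> tensor X S \<and> B \<in> tensor X S
      then Inf {qd X d S a b | a b. a \<in> A \<and> b \<in> B} else 0)"

definition tensor_S :: "'a set \<Rightarrow> (real \<times> real \<Rightarrow> 'a) \<Rightarrow> real \<times> real \<Rightarrow> ((int \<times> int) \<times> 'a) set" where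
  "tensor_S X S p =
     (let n = (SOME n. n \<in> NN \<and>
                 3 * fst p - real_of_int (fst n) \<in> {0..1} \<and>
                 3 * snd p - real_of_int (snd n) \<in> {0..1})
      in tclass X S (n, S (3 * fst p - real_of_int (fst n), 3 * snd p - real_of_int (snd n))))"

definition tensor_map :: "'b set \<Rightarrow> (real \<times> real \<Rightarrow> 'b) \<Rightarrow> ('a \<Rightarrow> 'b) \<Rightarrow>
    ((int \<times> int) \<times> 'a) set \<Rightarrow> ((int \<times> int) \<times> 'b) set" where
  "tensor_map Y T f A = (let a = (SOME a. a \<in> A) in tclass Y T (fst a, f (snd a)))"

end

theory Submission
  imports Defs
begin

text \<open>The quotient distance qd is a pseudometric because chains can be concatenated and
  reversed, and it is constant on classes. It separates classes because it dominates
  F b - F a for every F that is constant on glued points, 1/3-Lipschitz within each copy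
  and valued in [0, 2]. For two boundary points take for F the l1-distance of grid
  positions from the first one, propagated into the copies through their boundaries; for a
  point y off the boundary of its copy take the distance to y, capped by the (positive, by
  compactness) distance of y from the boundary. The first test function also gives (sq2) for
  N \<otimes> X, and (sq1) follows from the triangle inequality because each third of an edge of
  the big square lies in a single copy, where distances are scaled by 1/3. A morphism f
  preserves the gluing and does not increase the cost of chains, so N \<otimes> f is well defined,
  short, and commutes with the boundary maps.\<close>

section \<open>Short paths in metric spaces\<close>

lemma (in Metric_space) short_path_Un:
  assumes "a \<le> b" "b \<le> c" and \<phi>: "\<phi> ` {a..c} \<subseteq> M"
    and ab: "\<forall>r\<in>{a..b}. \<forall>s\<in>{a..b}. d (\<phi> r) (\<phi> s) \<le> \<bar>s - r\<bar>"
    and bc: "\<forall>r\<in>{b..c}. \<forall>s\<in>{b..c}. d (\<phi> r) (\<phi> s) \<le> \<bar>s - r\<bar>"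
  shows "\<forall>r\<in>{a..c}. \<forall>s\<in>{a..c}. d (\<phi> r) (\<phi> s) \<le> \<bar>s - r\<bar>"
proof -
  have ordered: "d (\<phi> r) (\<phi> s) \<le> s - r" if rs: "r \<in> {a..c}" "s \<in> {a..c}" "r \<le> s" for r s
  proof (cases "s \<le> b \<or> b \<le> r")
    case True
    then have "r \<in> {a..b} \<and> s \<in> {a..b} \<or> r \<in> {b..c} \<and> s \<in> {b..c}" using rs by auto
    then show ?thesis using ab bc \<open>r \<le> s\<close> by fastforce
  next
    case False
    have "\<phi> r \<in> M" "\<phi> b \<in> M" "\<phi> s \<in> M" using \<phi> rs False by auto
    then have "d (\<phi> r) (\<phi> s) \<le> d (\<phi> r) (\<phi> b) + d (\<phi> b) (\<phi> s)"
      by (rule triangle)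
    also have "d (\<phi> r) (\<phi> b) \<le> b - r" using ab[rule_format, of r b] rs False assms(1) by auto
    also have "d (\<phi> b) (\<phi> s) \<le> s - b" using bc[rule_format, of b s] rs False assms(2) by auto
    finally show ?thesis by simp
  qed
  show ?thesis
  proof (intro ballI)
    fix r s assume "r \<in> {a..c}" "s \<in> {a..c}"
    then show "d (\<phi> r) (\<phi> s) \<le> \<bar>s - r\<bar>"
      using ordered[of r s] ordered[of s r] commute[of "\<phi> r" "\<phi> s"] by (cases "r \<le> s") auto
  qed
qed

lemma (in Metric_space) short_path_thirds:
  assumes \<phi>: "\<phi> ` {0..1} \<subseteq> M"
    and thirds: "\<And>k r s. k < 3 \<Longrightarrow> r \<in> {real k / 3..(real k + 1) / 3} \<Longrightarrow>
      s \<in> {real k / 3..(real k + 1) / 3} \<Longrightarrow> d (\<phi> r) (\<phi> s) \<le> \<bar>s - r\<bar>"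
  shows "\<forall>r\<in>{0..1}. \<forall>s\<in>{0..1}. d (\<phi> r) (\<phi> s) \<le> \<bar>s - r\<bar>"
proof -
  have t: "\<forall>r\<in>{0..1/3}. \<forall>s\<in>{0..1/3}. d (\<phi> r) (\<phi> s) \<le> \<bar>s - r\<bar>"
    "\<forall>r\<in>{1/3..2/3}. \<forall>s\<in>{1/3..2/3}. d (\<phi> r) (\<phi> s) \<le> \<bar>s - r\<bar>"
    "\<forall>r\<in>{2/3..1}. \<forall>s\<in>{2/3..1}. d (\<phi> r) (\<phi> s) \<le> \<bar>s - r\<bar>"
    using thirds[of 0] thirds[of 1] thirds[of 2] by simp_all
  have "\<forall>r\<in>{0..2/3}. \<forall>s\<in>{0..2/3}. d (\<phi> r) (\<phi> s) \<le> \<bar>s - r\<bar>"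
    by (rule short_path_Un[OF _ _ _ t(1,2)]) (use \<phi> in auto)
  then show ?thesis
    using short_path_Un[OF _ _ \<phi> _ t(3)] by simp
qed

lemma (in Metric_space) short_path_bounded_away:
  fixes K :: "real set"
  assumes "compact K" and \<phi>: "\<phi> ` K \<subseteq> M" and short: "\<forall>r\<in>K. \<forall>s\<in>K. d (\<phi> r) (\<phi> s) \<le> \<bar>s - r\<bar>"
    and y: "y \<in> M" "y \<notin> \<phi> ` K"
  obtains e where "e > 0" "\<And>t. t \<in> K \<Longrightarrow> e \<le> d (\<phi> t) y"
proof (cases "K = {}")
  case False
  have "lipschitz_on 1 K (\<lambda>t. d (\<phi> t) y)"
  proof (rule lipschitz_onI)
    fix r s assume "r \<in> K" "s \<in> K"
    then have "\<bar>d (\<phi> r) y - d (\<phi> s) y\<bar> \<le> d (\<phi> r) (\<phi> s)"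
      using mdist_reverse_triangle[of "\<phi> r" y "\<phi> s"] commute[of y "\<phi> s"] \<phi> y by auto
    moreover have "d (\<phi> r) (\<phi> s) \<le> dist r s"
      using short \<open>r \<in> K\<close> \<open>s \<in> K\<close> by (simp add: dist_real_def abs_minus_commute)
    ultimately show "dist (d (\<phi> r) y) (d (\<phi> s) y) \<le> 1 * dist r s"
      by (simp add: dist_real_def)
  qed simp
  then obtain t0 where "t0 \<in> K" "\<And>t. t \<in> K \<Longrightarrow> d (\<phi> t0) y \<le> d (\<phi> t) y"
    using continuous_attains_inf[OF \<open>compact K\<close> False] lipschitz_on_continuous_on by blast
  moreover have "d (\<phi> t0) y > 0"
    using \<open>t0 \<in> K\<close> \<phi> y by (auto intro!: mdist_pos_less)
  ultimately show ?thesis using that by blast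
qed (use that[of 1] in simp)

section \<open>Grid positions\<close>

lemma mem_M0_iff:
  "p \<in> M0 \<longleftrightarrow> 0 \<le> fst p \<and> fst p \<le> 1 \<and> 0 \<le> snd p \<and> snd p \<le> 1 \<and>
     (fst p = 0 \<or> fst p = 1 \<or> snd p = 0 \<or> snd p = 1)"
  by (cases p) (auto simp: M0_def)

lemma mem_NN_iff: "n \<in> NN \<longleftrightarrow> fst n \<in> {0, 1, 2} \<and> snd n \<in> {0, 1, 2}"
  by (cases n) (auto simp: NN_def)

lemma M0_nonempty: "M0 \<noteq> {}"
  using mem_M0_iff[of "(0, 0)"] by auto

text \<open>grid_pos n p is the point (n + p)/3 of the paper, scaled by 3.\<close>
definition grid_pos :: "int \<times> int \<Rightarrow> real \<times> real \<Rightarrow> real \<times> real" where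
  "grid_pos n p = (real_of_int (fst n) + fst p, real_of_int (snd n) + snd p)"

definition l1_dist :: "real \<times> real \<Rightarrow> real \<times> real \<Rightarrow> real" where
  "l1_dist x y = \<bar>fst x - fst y\<bar> + \<bar>snd x - snd y\<bar>"

lemma l1_dist_commute: "l1_dist x y = l1_dist y x"
  by (simp add: l1_dist_def abs_minus_commute)

lemma l1_dist_triangle: "l1_dist x z \<le> l1_dist x y + l1_dist y z"
  unfolding l1_dist_def by linarith

lemma l1_dist_nonneg: "0 \<le> l1_dist x y"
  by (simp add: l1_dist_def)

lemma l1_dist_self [simp]: "l1_dist x x = 0"
  by (simp add: l1_dist_def)

lemma l1_dist_eq_0_iff: "l1_dist x y = 0 \<longleftrightarrow> x = y"
  by (auto simp: l1_dist_def prod_eq_iff)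

lemma l1_dist_grid_pos_same: "l1_dist (grid_pos n p) (grid_pos n q) = l1_dist p q"
  by (simp add: l1_dist_def grid_pos_def)

lemma grid_pos_eq_imp_adjacent:
  assumes "grid_pos m p = grid_pos n q" "p \<in> M0" "q \<in> M0"
  shows "\<bar>fst m - fst n\<bar> \<le> 1" "\<bar>snd m - snd n\<bar> \<le> 1"
proof -
  have "\<bar>real_of_int (fst m) - real_of_int (fst n)\<bar> \<le> 1"
    "\<bar>real_of_int (snd m) - real_of_int (snd n)\<bar> \<le> 1"
    using assms by (auto simp: grid_pos_def mem_M0_iff)
  then show "\<bar>fst m - fst n\<bar> \<le> 1" "\<bar>snd m - snd n\<bar> \<le> 1"
    by linarith+
qed

lemma grid_rep_in_M0:
  assumes "p \<in> M0" "n \<in> NN" "grid_pos n q = (3 * fst p, 3 * snd p)"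
    and "fst q \<in> {0..1}" "snd q \<in> {0..1}"
  shows "q \<in> M0"
  using assms by (auto simp: mem_M0_iff mem_NN_iff grid_pos_def)

lemma M0_obtain_grid_rep:
  assumes "p \<in> M0"
  obtains n q where "n \<in> NN" "q \<in> M0" "grid_pos n q = (3 * fst p, 3 * snd p)"
proof -
  define k where "k x = (if 3 * x \<le> 1 then 0 else if 3 * x \<le> 2 then 1 else 2 :: int)" for x :: real
  define n where "n = (k (fst p), k (snd p))"
  define q where "q = (3 * fst p - real_of_int (fst n), 3 * snd p - real_of_int (snd n))"
  have k: "0 \<le> 3 * x - k x \<and> 3 * x - k x \<le> 1" if "0 \<le> x" "x \<le> 1" for x
    using that by (simp add: k_def)
  have n: "n \<in> NN" by (simp add: n_def k_def mem_NN_iff)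
  have pos: "grid_pos n q = (3 * fst p, 3 * snd p)" by (simp add: grid_pos_def q_def)
  have "fst q \<in> {0..1}" "snd q \<in> {0..1}"
    using assms k by (simp_all add: q_def n_def mem_M0_iff)
  then have "q \<in> M0" by (rule grid_rep_in_M0[OF assms n pos])
  with n pos show ?thesis using that by blast
qed

lemma tcost_Nil [simp]: "tcost X d S [] = 0"
  by (simp add: tcost_def)

lemma tcost_singleton [simp]: "tcost X d S [x] = 0"
  by (simp add: tcost_def)

lemma tcost_Cons_Cons [simp]: "tcost X d S (x # y # zs) = tstep X d S x y + tcost X d S (y # zs)"
  unfolding tcost_def by (simp add: sum.lessThan_Suc_shift del: sum.lessThan_Suc)

section \<open>The gluing relation\<close>

locale square_metric_space =
  fixes X :: "'a set" and d :: "'a \<Rightarrow> 'a \<Rightarrow> real" and S :: "real \<times> real \<Rightarrow> 'a"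
  assumes square_ms: "square_ms X d S"
begin

sublocale Metric_space X d
  using square_ms by (simp add: square_ms_def)

lemma dist_le_2: "x \<in> X \<Longrightarrow> y \<in> X \<Longrightarrow> d x y \<le> 2"
  using square_ms by (simp add: square_ms_def)

lemma S_in: "p \<in> M0 \<Longrightarrow> S p \<in> X"
  using square_ms by (auto simp: square_ms_def)

lemma S_eq_iff: "p \<in> M0 \<Longrightarrow> q \<in> M0 \<Longrightarrow> S p = S q \<longleftrightarrow> p = q"
  using square_ms by (auto simp: square_ms_def inj_on_def)

lemma dist_S_vertical: "i \<in> {0, 1} \<Longrightarrow> r \<in> {0..1} \<Longrightarrow> s \<in> {0..1} \<Longrightarrow> d (S (i, r)) (S (i, s)) = \<bar>s - r\<bar>"
  using square_ms unfolding square_ms_def by blast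

lemma dist_S_horizontal: "i \<in> {0, 1} \<Longrightarrow> r \<in> {0..1} \<Longrightarrow> s \<in> {0..1} \<Longrightarrow> d (S (r, i)) (S (s, i)) = \<bar>s - r\<bar>"
  using square_ms unfolding square_ms_def by blast

lemma l1_dist_le_dist_S: "p \<in> M0 \<Longrightarrow> q \<in> M0 \<Longrightarrow> l1_dist p q \<le> d (S p) (S q)"
  using square_ms unfolding square_ms_def l1_dist_def by blast

definition glued :: "(int \<times> int) \<times> 'a \<Rightarrow> (int \<times> int) \<times> 'a \<Rightarrow> bool" where
  "glued u v \<longleftrightarrow> (\<exists>m n p q. m \<in> NN \<and> n \<in> NN \<and> p \<in> M0 \<and> q \<in> M0 \<and>
     u = (m, S p) \<and> v = (n, S q) \<and> grid_pos m p = grid_pos n q)"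

lemma glued_in: "glued u v \<Longrightarrow> u \<in> NN \<times> X \<and> v \<in> NN \<times> X"
  unfolding glued_def using S_in by blast

lemma glued_sym: "glued u v \<Longrightarrow> glued v u"
  unfolding glued_def by metis

lemma glued_trans: "glued u v \<Longrightarrow> glued v w \<Longrightarrow> glued u w"
  unfolding glued_def by (metis S_eq_iff prod.inject)

lemma teq_refl: "u \<in> NN \<times> X \<Longrightarrow> (u, u) \<in> teq X S"
  by (simp add: teq_def)

lemma tgen_imp_glued: "(u, v) \<in> tgen S \<Longrightarrow> glued u v"
  unfolding tgen_def glued_def grid_pos_def by blast

lemma teq_aligned:
  assumes "m \<in> NN" "n \<in> NN" "p \<in> M0" "q \<in> M0" "grid_pos m p = grid_pos n q"
    and "fst m = fst n \<or> snd m = snd n"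
  shows "((m, S p), (n, S q)) \<in> teq X S"
proof (cases "m = n")
  case True
  then have "p = q" using assms(5) by (simp add: grid_pos_def prod_eq_iff)
  then show ?thesis using True assms S_in by (simp add: teq_def)
next
  case False
  then have "adj m n"
    using assms(6) grid_pos_eq_imp_adjacent[OF assms(5,3,4)] by (auto simp: adj_def prod_eq_iff)
  moreover have "real_of_int (fst m) + fst p = real_of_int (fst n) + fst q"
    "real_of_int (snd m) + snd p = real_of_int (snd n) + snd q"
    using assms(5) by (simp_all add: grid_pos_def prod_eq_iff)
  ultimately have "((m, S p), (n, S q)) \<in> tgen S"
    using assms(1-4) unfolding tgen_def by blast
  then show ?thesis using assms S_in by (auto simp: teq_def)
qed

text \<open>Two glued points are related in at most two generating steps, through the copy
  sharing one coordinate with each of them.\<close>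
lemma glued_imp_teq:
  assumes "glued u v"
  shows "(u, v) \<in> teq X S"
proof -
  obtain m n p q where mn: "m \<in> NN" "n \<in> NN" and pq: "p \<in> M0" "q \<in> M0"
    and uv: "u = (m, S p)" "v = (n, S q)" and eq: "grid_pos m p = grid_pos n q"
    using assms unfolding glued_def by blast
  define k where "k = (fst n, snd m)"
  define r where "r = (fst q, snd p)"
  have "k \<in> NN" using mn by (auto simp: k_def mem_NN_iff)
  have "r \<in> M0"
  proof (cases "fst m = fst n")
    case True
    then have "r = p" using eq by (simp add: r_def grid_pos_def prod_eq_iff)
    then show ?thesis using pq by simp
  next
    case False
    then have "fst m - fst n = 1 \<or> fst m - fst n = -1"
      using grid_pos_eq_imp_adjacent[OF eq pq] by linarith
    then have "fst q = fst p + 1 \<or> fst q = fst p - 1"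
      using eq by (auto simp: grid_pos_def)
    then show ?thesis using pq by (auto simp: r_def mem_M0_iff)
  qed
  have "((m, S p), (k, S r)) \<in> teq X S"
    by (rule teq_aligned) (use mn pq eq \<open>k \<in> NN\<close> \<open>r \<in> M0\<close> in \<open>auto simp: k_def r_def grid_pos_def\<close>)
  moreover have "((k, S r), (n, S q)) \<in> teq X S"
    by (rule teq_aligned) (use mn pq eq \<open>k \<in> NN\<close> \<open>r \<in> M0\<close> in \<open>auto simp: k_def r_def grid_pos_def\<close>)
  ultimately show ?thesis
    unfolding uv teq_def by (auto intro: rtrancl_trans)
qed

lemma teq_iff: "(u, v) \<in> teq X S \<longleftrightarrow> u \<in> NN \<times> X \<and> (u = v \<or> glued u v)"
proof
  assume "(u, v) \<in> teq X S"
  then have "u \<in> NN \<times> X" and "(u, v) \<in> (tgen S \<union> (tgen S)\<inverse>)\<^sup>*"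
    by (simp_all add: teq_def)
  from this(2) have "u = v \<or> glued u v"
  proof (induction rule: rtrancl_induct)
    case (step v w)
    then have "glued v w"
      using tgen_imp_glued glued_sym by blast
    then show ?case using step.IH glued_trans by blast
  qed simp
  with \<open>u \<in> NN \<times> X\<close> show "u \<in> NN \<times> X \<and> (u = v \<or> glued u v)" ..
next
  assume "u \<in> NN \<times> X \<and> (u = v \<or> glued u v)"
  then show "(u, v) \<in> teq X S"
    using glued_imp_teq teq_refl by blast
qed

lemma teq_S_iff:
  assumes "m \<in> NN" "n \<in> NN" "p \<in> M0" "q \<in> M0"
  shows "((m, S p), (n, S q)) \<in> teq X S \<longleftrightarrow> grid_pos m p = grid_pos n q"
proof
  assume "((m, S p), (n, S q)) \<in> teq X S"
  then have "(m, S p) = (n, S q) \<or> glued (m, S p) (n, S q)" by (simp add: teq_iff)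
  then show "grid_pos m p = grid_pos n q"
  proof
    assume "glued (m, S p) (n, S q)"
    then obtain m' n' p' q' where "p' \<in> M0" "q' \<in> M0" "(m, S p) = (m', S p')" "(n, S q) = (n', S q')"
      "grid_pos m' p' = grid_pos n' q'"
      unfolding glued_def by blast
    then show ?thesis using assms S_eq_iff by auto
  qed (use assms S_eq_iff in auto)
next
  assume "grid_pos m p = grid_pos n q"
  then have "glued (m, S p) (n, S q)" unfolding glued_def using assms by blast
  then show "((m, S p), (n, S q)) \<in> teq X S" by (rule glued_imp_teq)
qed

lemma equiv_teq: "equiv (NN \<times> X) (teq X S)"
proof (rule equivI)
  show "refl_on (NN \<times> X) (teq X S)"
    by (auto simp: refl_on_def teq_iff dest: glued_in)
  show "sym (teq X S)"
    using glued_in glued_sym by (auto simp: sym_def teq_iff)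
  show "trans (teq X S)"
    using glued_trans by (auto simp: trans_def teq_iff)
qed (auto simp: teq_iff dest: glued_in)

lemma teq_sym: "(u, v) \<in> teq X S \<Longrightarrow> (v, u) \<in> teq X S"
  using equiv_teq by (rule equivE) (auto simp: sym_def)

lemma teq_in: "(u, v) \<in> teq X S \<Longrightarrow> u \<in> NN \<times> X \<and> v \<in> NN \<times> X"
  using equiv_teq by (rule equivE) auto

lemma tclass_in_tensor: "a \<in> NN \<times> X \<Longrightarrow> tclass X S a \<in> tensor X S"
  unfolding tclass_def tensor_def by (rule quotientI)

lemma tensor_obtain_tclass:
  assumes "A \<in> tensor X S"
  obtains a where "a \<in> NN \<times> X" "A = tclass X S a"
  using assms unfolding tclass_def tensor_def by (auto elim: quotientE)

lemma tclass_eq_iff: "a \<in> NN \<times> X \<Longrightarrow> b \<in> NN \<times> X \<Longrightarrow> tclass X S a = tclass X S b \<longleftrightarrow> (a, b) \<in> teq X S"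
  unfolding tclass_def by (rule eq_equiv_class_iff[OF equiv_teq])

lemma mem_tclass_iff: "b \<in> tclass X S a \<longleftrightarrow> (a, b) \<in> teq X S"
  by (simp add: tclass_def)

section \<open>The chain distance\<close>

lemma tstep_nonneg: "0 \<le> tstep X d S u v"
  by (simp add: tstep_def)

lemma tstep_le_2: "u \<in> NN \<times> X \<Longrightarrow> v \<in> NN \<times> X \<Longrightarrow> tstep X d S u v \<le> 2"
  using dist_le_2[of "snd u" "snd v"] by (auto simp: tstep_def)

lemma tstep_commute: "tstep X d S u v = tstep X d S v u"
  using teq_sym commute by (auto simp: tstep_def)

lemma tcost_nonneg: "0 \<le> tcost X d S zs"
  unfolding tcost_def by (intro sum_nonneg tstep_nonneg)

lemma tcost_append:
  "zs \<noteq> [] \<Longrightarrow> last zs = hd ws \<Longrightarrow> tcost X d S (zs @ tl ws) = tcost X d S zs + tcost X d S ws"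
proof (induction zs rule: induct_list012)
  case (2 x)
  then show ?case by (cases ws) auto
next
  case (3 x y zs)
  then show ?case by simp
qed simp

lemma tcost_rev: "tcost X d S (rev zs) = tcost X d S zs"
proof (induction zs rule: induct_list012)
  case (3 x y zs)
  have "tcost X d S (rev (x # y # zs)) = tcost X d S (rev (y # zs)) + tcost X d S [y, x]"
    using tcost_append[of "rev (y # zs)" "[y, x]"] by simp
  then show ?case using 3 tstep_commute[of x y] by simp
qed simp_all

definition chain_between :: "(int \<times> int) \<times> 'a \<Rightarrow> (int \<times> int) \<times> 'a \<Rightarrow> ((int \<times> int) \<times> 'a) list \<Rightarrow> bool" where
  "chain_between a b zs \<longleftrightarrow> zs \<noteq> [] \<and> hd zs = a \<and> last zs = b \<and> set zs \<subseteq> NN \<times> X"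

lemma qd_le_tcost: "chain_between a b zs \<Longrightarrow> qd X d S a b \<le> tcost X d S zs"
  unfolding qd_def chain_between_def
  by (rule cInf_lower) (auto intro!: bdd_belowI[of _ 0] simp: tcost_nonneg)

lemma qd_greatest:
  assumes "a \<in> NN \<times> X" "b \<in> NN \<times> X" and "\<And>zs. chain_between a b zs \<Longrightarrow> c \<le> tcost X d S zs"
  shows "c \<le> qd X d S a b"
  unfolding qd_def
proof (rule cInf_greatest)
  have "chain_between a b [a, b]" using assms(1,2) by (simp add: chain_between_def)
  then show "{tcost X d S zs |zs. zs \<noteq> [] \<and> hd zs = a \<and> last zs = b \<and> set zs \<subseteq> NN \<times> X} \<noteq> {}"
    unfolding chain_between_def by blast
qed (use assms(3) in \<open>auto simp: chain_between_def\<close>)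

lemma qd_nonneg: "a \<in> NN \<times> X \<Longrightarrow> b \<in> NN \<times> X \<Longrightarrow> 0 \<le> qd X d S a b"
  by (rule qd_greatest) (auto simp: tcost_nonneg)

lemma qd_le_tstep: "a \<in> NN \<times> X \<Longrightarrow> b \<in> NN \<times> X \<Longrightarrow> qd X d S a b \<le> tstep X d S a b"
  using qd_le_tcost[of a b "[a, b]"] by (simp add: chain_between_def)

lemma qd_teq: "(a, b) \<in> teq X S \<Longrightarrow> qd X d S a b = 0"
  using qd_le_tstep[of a b] qd_nonneg[of a b] teq_in[of a b] by (simp add: tstep_def)

lemma qd_triangle:
  assumes a: "a \<in> NN \<times> X" and b: "b \<in> NN \<times> X" and c: "c \<in> NN \<times> X"
  shows "qd X d S a c \<le> qd X d S a b + qd X d S b c"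
proof -
  have concat: "qd X d S a c \<le> tcost X d S zs + tcost X d S ws"
    if "chain_between a b zs" "chain_between b c ws" for zs ws
  proof -
    have "chain_between a c (zs @ tl ws)"
      using that by (cases ws) (auto simp: chain_between_def)
    then have "qd X d S a c \<le> tcost X d S (zs @ tl ws)" by (rule qd_le_tcost)
    also have "\<dots> = tcost X d S zs + tcost X d S ws"
      using that by (intro tcost_append) (auto simp: chain_between_def)
    finally show ?thesis .
  qed
  have "qd X d S a c - tcost X d S ws \<le> qd X d S a b" if "chain_between b c ws" for ws
    by (rule qd_greatest[OF a b]) (use concat that in force)
  then have "qd X d S a c - qd X d S a b \<le> qd X d S b c"
    by (intro qd_greatest[OF b c]) force
  then show ?thesis by simp
qed

lemma qd_commute: "qd X d S a b = qd X d S b a"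
proof -
  have reverse: "{tcost X d S zs |zs. chain_between a b zs} \<subseteq> {tcost X d S zs |zs. chain_between b a zs}"
    for a b
  proof clarify
    fix zs assume "chain_between a b zs"
    then have "chain_between b a (rev zs)" by (auto simp: chain_between_def hd_rev last_rev)
    then show "\<exists>ws. tcost X d S zs = tcost X d S ws \<and> chain_between b a ws"
      using tcost_rev by metis
  qed
  have "{tcost X d S zs |zs. chain_between a b zs} = {tcost X d S zs |zs. chain_between b a zs}"
    using reverse[of a b] reverse[of b a] by (rule subset_antisym)
  then show ?thesis by (simp add: qd_def chain_between_def)
qed

lemma qd_teq_cong:
  assumes "(a, a') \<in> teq X S" "(b, b') \<in> teq X S"
  shows "qd X d S a' b' = qd X d S a b"
proof -
  have "qd X d S x' y' \<le> qd X d S x y"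
    if "(x, x') \<in> teq X S" "(y, y') \<in> teq X S" for x x' y y'
  proof -
    have "qd X d S x' y' \<le> qd X d S x' x + qd X d S x y'"
      "qd X d S x y' \<le> qd X d S x y + qd X d S y y'"
      using qd_triangle teq_in that by blast+
    then show ?thesis using qd_teq teq_sym that by fastforce
  qed
  then show ?thesis using assms teq_sym by (meson order_antisym)
qed

lemma tensor_dist_tclass:
  assumes "a \<in> NN \<times> X" "b \<in> NN \<times> X"
  shows "tensor_dist X d S (tclass X S a) (tclass X S b) = qd X d S a b"
proof -
  have "qd X d S a' b' = qd X d S a b" if "a' \<in> tclass X S a" "b' \<in> tclass X S b" for a' b'
    using that qd_teq_cong by (simp add: mem_tclass_iff)
  moreover have "a \<in> tclass X S a" "b \<in> tclass X S b"
    using assms teq_refl by (simp_all add: mem_tclass_iff)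
  ultimately have "{qd X d S a' b' |a' b'. a' \<in> tclass X S a \<and> b' \<in> tclass X S b} = {qd X d S a b}"
    by blast
  then show ?thesis using assms tclass_in_tensor by (simp add: tensor_dist_def)
qed

section \<open>Separation of classes\<close>

lemma tcost_ge_diff:
  assumes F: "\<And>u v. u \<in> NN \<times> X \<Longrightarrow> v \<in> NN \<times> X \<Longrightarrow> F v - F u \<le> tstep X d S u v"
  shows "zs \<noteq> [] \<Longrightarrow> set zs \<subseteq> NN \<times> X \<Longrightarrow> F (last zs) - F (hd zs) \<le> tcost X d S zs"
proof (induction zs rule: induct_list012)
  case (3 x y zs)
  then have "F (last (y # zs)) - F y \<le> tcost X d S (y # zs)" by simp
  moreover have "F y - F x \<le> tstep X d S x y" using 3 F by simp
  ultimately show ?case by simp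
qed simp_all

lemma tstep_ge_diff:
  assumes glued: "\<And>u v. glued u v \<Longrightarrow> F u = F v"
    and same_copy: "\<And>n x y. n \<in> NN \<Longrightarrow> x \<in> X \<Longrightarrow> y \<in> X \<Longrightarrow> F (n, y) - F (n, x) \<le> d x y / 3"
    and bounds: "\<And>u. u \<in> NN \<times> X \<Longrightarrow> 0 \<le> F u \<and> F u \<le> 2"
    and u: "u \<in> NN \<times> X" and v: "v \<in> NN \<times> X"
  shows "F v - F u \<le> tstep X d S u v"
proof (cases "(u, v) \<in> teq X S")
  case True
  then have "u = v \<or> glued u v" by (simp add: teq_iff)
  then have "F v = F u" using glued by metis
  then show ?thesis using tstep_nonneg by simp
next
  case False
  show ?thesis
  proof (cases "fst u = fst v")
    case True
    then have "F v - F u \<le> d (snd u) (snd v) / 3"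
      using same_copy[of "fst u" "snd u" "snd v"] u v by (cases u, cases v) auto
    then show ?thesis using True False by (simp add: tstep_def)
  next
    case different_copies: False
    have "F v - F u \<le> 2" using bounds[OF u] bounds[OF v] by linarith
    then show ?thesis using False different_copies by (simp add: tstep_def)
  qed
qed

lemma qd_ge_diff:
  assumes "\<And>u v. glued u v \<Longrightarrow> F u = F v"
    and "\<And>n x y. n \<in> NN \<Longrightarrow> x \<in> X \<Longrightarrow> y \<in> X \<Longrightarrow> F (n, y) - F (n, x) \<le> d x y / 3"
    and "\<And>u. u \<in> NN \<times> X \<Longrightarrow> 0 \<le> F u \<and> F u \<le> 2"
    and a: "a \<in> NN \<times> X" and b: "b \<in> NN \<times> X"
  shows "F b - F a \<le> qd X d S a b"
proof (rule qd_greatest[OF a b])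
  fix zs assume "chain_between a b zs"
  then show "F b - F a \<le> tcost X d S zs"
    using tcost_ge_diff[OF tstep_ge_diff[OF assms(1-3)]] by (auto simp: chain_between_def)
qed

text \<open>On a boundary point grid_gauge c is a third of the l1-distance of its grid position from c
  (capped at 2); the infimum over the boundary of the copy propagates this into the copy.\<close>
definition grid_gauge :: "real \<times> real \<Rightarrow> (int \<times> int) \<times> 'a \<Rightarrow> real" where
  "grid_gauge c u = min 2 (INF q\<in>M0. (l1_dist (grid_pos (fst u) q) c + d (snd u) (S q)) / 3)"

lemma grid_gauge_nonneg: "0 \<le> grid_gauge c u"
  unfolding grid_gauge_def l1_dist_def
  by (auto intro!: cINF_greatest M0_nonempty)

lemma grid_gauge_S:
  assumes "p \<in> M0"
  shows "grid_gauge c (m, S p) = min 2 (l1_dist (grid_pos m p) c / 3)"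
proof -
  have "(INF q\<in>M0. (l1_dist (grid_pos m q) c + d (S p) (S q)) / 3) = l1_dist (grid_pos m p) c / 3"
  proof (rule cInf_eq_minimum)
    show "l1_dist (grid_pos m p) c / 3 \<in> (\<lambda>q. (l1_dist (grid_pos m q) c + d (S p) (S q)) / 3) ` M0"
      using assms S_in[OF assms] by (auto intro!: image_eqI[of _ _ p])
  next
    fix x assume "x \<in> (\<lambda>q. (l1_dist (grid_pos m q) c + d (S p) (S q)) / 3) ` M0"
    then obtain q where q: "q \<in> M0" "x = (l1_dist (grid_pos m q) c + d (S p) (S q)) / 3"
      by blast
    have "l1_dist (grid_pos m p) c \<le> l1_dist (grid_pos m p) (grid_pos m q) + l1_dist (grid_pos m q) c"
      by (rule l1_dist_triangle)
    also have "\<dots> \<le> d (S p) (S q) + l1_dist (grid_pos m q) c"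
      using l1_dist_le_dist_S[OF assms q(1)] by (simp add: l1_dist_grid_pos_same)
    finally show "l1_dist (grid_pos m p) c / 3 \<le> x"
      using q(2) by simp
  qed
  then show ?thesis by (simp add: grid_gauge_def)
qed

lemma grid_gauge_same_copy:
  assumes "x \<in> X" "y \<in> X"
  shows "grid_gauge c (n, y) - grid_gauge c (n, x) \<le> d x y / 3"
proof -
  let ?I = "\<lambda>y. INF q\<in>M0. (l1_dist (grid_pos n q) c + d y (S q)) / 3"
  have bdd: "bdd_below ((\<lambda>q. (l1_dist (grid_pos n q) c + d y (S q)) / 3) ` M0)"
    by (rule bdd_belowI2[of _ 0]) (simp add: l1_dist_def)
  have "?I y - d x y / 3 \<le> ?I x"
  proof (rule cINF_greatest[OF M0_nonempty])
    fix q assume "q \<in> M0"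
    have "?I y \<le> (l1_dist (grid_pos n q) c + d y (S q)) / 3"
      using bdd \<open>q \<in> M0\<close> by (rule cINF_lower)
    also have "d y (S q) \<le> d y x + d x (S q)"
      using assms S_in[OF \<open>q \<in> M0\<close>] by (intro triangle)
    finally show "?I y - d x y / 3 \<le> (l1_dist (grid_pos n q) c + d x (S q)) / 3"
      using commute[of x y] by simp
  qed
  then show ?thesis
    unfolding grid_gauge_def fst_conv snd_conv using nonneg[of x y] by linarith
qed

lemma qd_ge_l1_dist:
  assumes "m \<in> NN" "n \<in> NN" "p \<in> M0" "q \<in> M0"
  shows "min 2 (l1_dist (grid_pos m p) (grid_pos n q) / 3) \<le> qd X d S (m, S p) (n, S q)"
proof -
  let ?F = "grid_gauge (grid_pos m p)"
  have "?F (n, S q) - ?F (m, S p) \<le> qd X d S (m, S p) (n, S q)"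
  proof (rule qd_ge_diff)
    fix u v assume "glued u v"
    then show "?F u = ?F v" by (auto simp: glued_def grid_gauge_S)
  qed (use assms S_in grid_gauge_same_copy grid_gauge_nonneg in \<open>auto simp: grid_gauge_def\<close>)
  then show ?thesis
    using assms by (simp add: grid_gauge_S l1_dist_commute)
qed

lemma edge_bounded_away:
  assumes y: "y \<in> X" "y \<notin> S ` M0"
    and edge: "\<gamma> = (\<lambda>t. (i, t)) \<or> \<gamma> = (\<lambda>t. (t, i))" "i \<in> {0, 1}"
  shows "\<exists>e>0. \<forall>t\<in>{0..1}. e \<le> d (S (\<gamma> t)) y"
proof -
  have "\<gamma> ` {0..1} \<subseteq> M0" using edge by (auto simp: mem_M0_iff)
  then have "(\<lambda>t. S (\<gamma> t)) ` {0..1} \<subseteq> X" "y \<notin> (\<lambda>t. S (\<gamma> t)) ` {0..1}"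
    using S_in y(2) by blast+
  moreover have "\<forall>r\<in>{0..1}. \<forall>s\<in>{0..1}. d (S (\<gamma> r)) (S (\<gamma> s)) \<le> \<bar>s - r\<bar>"
    using edge dist_S_vertical dist_S_horizontal by auto
  ultimately show ?thesis
    using short_path_bounded_away[OF compact_Icc _ _ y(1)] by metis
qed

lemma boundary_bounded_away:
  assumes y: "y \<in> X" "y \<notin> S ` M0"
  obtains e where "e > 0" "\<And>q. q \<in> M0 \<Longrightarrow> e \<le> d (S q) y"
proof -
  obtain e1 where e1: "e1 > 0" "\<forall>t\<in>{0..1}. e1 \<le> d (S (0, t)) y"
    using edge_bounded_away[OF y, of "\<lambda>t. (0, t)" 0] by auto
  obtain e2 where e2: "e2 > 0" "\<forall>t\<in>{0..1}. e2 \<le> d (S (1, t)) y"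
    using edge_bounded_away[OF y, of "\<lambda>t. (1, t)" 1] by auto
  obtain e3 where e3: "e3 > 0" "\<forall>t\<in>{0..1}. e3 \<le> d (S (t, 0)) y"
    using edge_bounded_away[OF y, of "\<lambda>t. (t, 0)" 0] by auto
  obtain e4 where e4: "e4 > 0" "\<forall>t\<in>{0..1}. e4 \<le> d (S (t, 1)) y"
    using edge_bounded_away[OF y, of "\<lambda>t. (t, 1)" 1] by auto
  define e where "e = min (min e1 e2) (min e3 e4)"
  show ?thesis
  proof (rule that)
    show "e > 0" using e1 e2 e3 e4 by (simp add: e_def)
  next
    fix q assume "q \<in> M0"
    then obtain a b where q: "q = (a, b)" "a \<in> {0..1}" "b \<in> {0..1}" and "a = 0 \<or> a = 1 \<or> b = 0 \<or> b = 1"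
      by (cases q) (auto simp: mem_M0_iff)
    then consider "q = (0, b)" | "q = (1, b)" | "q = (a, 0)" | "q = (a, 1)" by blast
    then show "e \<le> d (S q) y"
    proof cases
      case 1 then show ?thesis using e1(2)[rule_format, OF q(3)] by (simp add: e_def)
    next
      case 2 then show ?thesis using e2(2)[rule_format, OF q(3)] by (simp add: e_def)
    next
      case 3 then show ?thesis using e3(2)[rule_format, OF q(2)] by (simp add: e_def)
    next
      case 4 then show ?thesis using e4(2)[rule_format, OF q(2)] by (simp add: e_def)
    qed
  qed
qed

lemma qd_pos_off_boundary:
  assumes n: "n \<in> NN" and y: "y \<in> X" "y \<notin> S ` M0" and b: "b \<in> NN \<times> X" "b \<noteq> (n, y)"
  shows "0 < qd X d S (n, y) b"
proof -
  obtain e where e: "e > 0" "\<And>q. q \<in> M0 \<Longrightarrow> e \<le> d (S q) y"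
    using boundary_bounded_away[OF y] by blast
  define e' where "e' = min (e / 3) 1"
  have e': "0 < e'" "e' \<le> 1" using e(1) by (auto simp: e'_def)
  have e'_le: "e' \<le> d (S q) y / 3" if "q \<in> M0" for q
    using e(2)[OF that] by (simp add: e'_def)
  \<comment> \<open>A chain can leave the copy n only through its boundary, at distance at least 3 e' from y.\<close>
  define F where "F u = (if fst u = n then min (d (snd u) y / 3) e' else e')" for u
  have F_S: "F (m, S q) = e'" if "q \<in> M0" for m q
    using e'_le[OF that] by (simp add: F_def)
  have "F b - F (n, y) \<le> qd X d S (n, y) b"
  proof (rule qd_ge_diff)
    fix u v assume "glued u v"
    then obtain m1 m2 p q where "p \<in> M0" "q \<in> M0" "u = (m1, S p)" "v = (m2, S q)"
      unfolding glued_def by blast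
    then show "F u = F v" using F_S by simp
  next
    fix m x z assume "m \<in> NN" "x \<in> X" "z \<in> X"
    then have "d z y \<le> d z x + d x y" using y by (intro triangle)
    then show "F (m, z) - F (m, x) \<le> d x z / 3"
      using commute[of x z] nonneg[of x z] by (auto simp: F_def min_def simp del: nonneg)
  qed (use n y b e' in \<open>auto simp: F_def min_def\<close>)
  moreover have "F (n, y) = 0" using y e' by (simp add: F_def)
  moreover have "F b > 0"
    using b y e' by (cases b) (auto simp: F_def)
  ultimately show ?thesis by simp
qed

lemma qd_eq_0_imp_teq:
  assumes a: "a \<in> NN \<times> X" and b: "b \<in> NN \<times> X" and "qd X d S a b = 0"
  shows "(a, b) \<in> teq X S"
proof (cases "snd a \<in> S ` M0 \<and> snd b \<in> S ` M0")
  case True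
  then obtain m n p q where mn: "m \<in> NN" "n \<in> NN" and pq: "p \<in> M0" "q \<in> M0"
    and ab: "a = (m, S p)" "b = (n, S q)"
    using a b by (cases a, cases b) auto
  have "min 2 (l1_dist (grid_pos m p) (grid_pos n q) / 3) \<le> 0"
    using qd_ge_l1_dist[OF mn pq] assms(3) ab by simp
  then have "l1_dist (grid_pos m p) (grid_pos n q) = 0"
    using l1_dist_nonneg[of "grid_pos m p" "grid_pos n q"] by linarith
  then show ?thesis
    using mn pq ab by (simp add: l1_dist_eq_0_iff teq_S_iff)
next
  case False
  have "a = b"
  proof (rule ccontr)
    assume "a \<noteq> b"
    from False consider "snd a \<notin> S ` M0" | "snd b \<notin> S ` M0" by blast
    then have "0 < qd X d S a b"
    proof cases
      case 1
      then show ?thesis using qd_pos_off_boundary[of "fst a" "snd a" b] a b \<open>a \<noteq> b\<close> by auto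
    next
      case 2
      then show ?thesis using qd_pos_off_boundary[of "fst b" "snd b" a] a b \<open>a \<noteq> b\<close> qd_commute by auto
    qed
    with assms(3) show False by simp
  qed
  then show ?thesis using a teq_refl by simp
qed

lemma tensor_metric: "Metric_space (tensor X S) (tensor_dist X d S)"
proof
  fix A B
  show "0 \<le> tensor_dist X d S A B"
  proof (cases "A \<in> tensor X S \<and> B \<in> tensor X S")
    case True
    then show ?thesis by (auto simp: tensor_dist_tclass qd_nonneg elim!: tensor_obtain_tclass)
  qed (auto simp: tensor_dist_def)
  show "tensor_dist X d S A B = tensor_dist X d S B A"
  proof (cases "A \<in> tensor X S \<and> B \<in> tensor X S")
    case True
    then show ?thesis by (auto simp: tensor_dist_tclass qd_commute elim!: tensor_obtain_tclass)
  qed (auto simp add: tensor_dist_def)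
next
  fix A B assume "A \<in> tensor X S" "B \<in> tensor X S"
  then obtain a b where ab: "a \<in> NN \<times> X" "b \<in> NN \<times> X" "A = tclass X S a" "B = tclass X S b"
    by (metis tensor_obtain_tclass)
  show "tensor_dist X d S A B = 0 \<longleftrightarrow> A = B"
    using ab qd_eq_0_imp_teq qd_teq by (auto simp: tensor_dist_tclass tclass_eq_iff)
next
  fix A B C assume "A \<in> tensor X S" "B \<in> tensor X S" "C \<in> tensor X S"
  then show "tensor_dist X d S A C \<le> tensor_dist X d S A B + tensor_dist X d S B C"
    by (auto simp: tensor_dist_tclass qd_triangle elim!: tensor_obtain_tclass)
qed

section \<open>The boundary map of N \<otimes> X\<close>

lemma tensor_S_eq:
  assumes p: "p \<in> M0" and n: "n \<in> NN" and q: "q \<in> M0" and pos: "grid_pos n q = (3 * fst p, 3 * snd p)"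
  shows "tensor_S X S p = tclass X S (n, S q)"
proof -
  define n' where "n' = (SOME n. n \<in> NN \<and> 3 * fst p - real_of_int (fst n) \<in> {0..1} \<and>
    3 * snd p - real_of_int (snd n) \<in> {0..1})"
  define q' where "q' = (3 * fst p - real_of_int (fst n'), 3 * snd p - real_of_int (snd n'))"
  have "3 * fst p - real_of_int (fst n) = fst q" "3 * snd p - real_of_int (snd n) = snd q"
    using pos by (auto simp: grid_pos_def)
  then have "n \<in> NN \<and> 3 * fst p - real_of_int (fst n) \<in> {0..1} \<and> 3 * snd p - real_of_int (snd n) \<in> {0..1}"
    using n q by (simp add: mem_M0_iff)
  then have n': "n' \<in> NN \<and> 3 * fst p - real_of_int (fst n') \<in> {0..1} \<and> 3 * snd p - real_of_int (snd n') \<in> {0..1}"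
    unfolding n'_def by (rule someI)
  moreover have pos': "grid_pos n' q' = (3 * fst p, 3 * snd p)" by (simp add: grid_pos_def q'_def)
  ultimately have "q' \<in> M0"
    by - (rule grid_rep_in_M0[OF p _ pos'], auto simp: q'_def)
  then have "((n', S q'), (n, S q)) \<in> teq X S"
    using n' n q pos pos' by (simp add: teq_S_iff)
  then have "tclass X S (n', S q') = tclass X S (n, S q)"
    using teq_in tclass_eq_iff by blast
  then show ?thesis by (simp add: tensor_S_def Let_def n'_def q'_def)
qed

lemma tensor_S_obtain_rep:
  assumes "p \<in> M0"
  obtains n q where "n \<in> NN" "q \<in> M0" "grid_pos n q = (3 * fst p, 3 * snd p)"
    "tensor_S X S p = tclass X S (n, S q)"
proof -
  obtain n q where "n \<in> NN" "q \<in> M0" "grid_pos n q = (3 * fst p, 3 * snd p)"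
    using M0_obtain_grid_rep[OF assms] .
  then show ?thesis using that tensor_S_eq[OF assms] by blast
qed

lemma tensor_S_in: "p \<in> M0 \<Longrightarrow> tensor_S X S p \<in> tensor X S"
  by (metis tensor_S_obtain_rep S_in tclass_in_tensor mem_Times_iff fst_conv snd_conv)

lemma inj_on_tensor_S: "inj_on (tensor_S X S) M0"
proof (rule inj_onI)
  fix p p' assume p: "p \<in> M0" and p': "p' \<in> M0" and eq: "tensor_S X S p = tensor_S X S p'"
  obtain n q where rep: "n \<in> NN" "q \<in> M0" "grid_pos n q = (3 * fst p, 3 * snd p)"
    "tensor_S X S p = tclass X S (n, S q)"
    using tensor_S_obtain_rep[OF p] .
  obtain n' q' where rep': "n' \<in> NN" "q' \<in> M0" "grid_pos n' q' = (3 * fst p', 3 * snd p')"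
    "tensor_S X S p' = tclass X S (n', S q')"
    using tensor_S_obtain_rep[OF p'] .
  have "((n, S q), (n', S q')) \<in> teq X S"
    using eq rep rep' S_in tclass_eq_iff by auto
  then have "grid_pos n q = grid_pos n' q'" using rep rep' by (simp add: teq_S_iff)
  then show "p = p'" using rep(3) rep'(3) by (simp add: prod_eq_iff)
qed

lemma l1_dist_le_tensor_dist_S:
  assumes p: "p \<in> M0" and p': "p' \<in> M0"
  shows "l1_dist p p' \<le> tensor_dist X d S (tensor_S X S p) (tensor_S X S p')"
proof -
  obtain n q where rep: "n \<in> NN" "q \<in> M0" "grid_pos n q = (3 * fst p, 3 * snd p)"
    "tensor_S X S p = tclass X S (n, S q)"
    using tensor_S_obtain_rep[OF p] .
  obtain n' q' where rep': "n' \<in> NN" "q' \<in> M0" "grid_pos n' q' = (3 * fst p', 3 * snd p')"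
    "tensor_S X S p' = tclass X S (n', S q')"
    using tensor_S_obtain_rep[OF p'] .
  have "l1_dist (grid_pos n q) (grid_pos n' q') = 3 * l1_dist p p'"
    unfolding l1_dist_def rep(3) rep'(3) by (simp add: abs_if)
  moreover have "0 \<le> fst p" "fst p \<le> 1" "0 \<le> snd p" "snd p \<le> 1"
    "0 \<le> fst p'" "fst p' \<le> 1" "0 \<le> snd p'" "snd p' \<le> 1"
    using p p' by (simp_all add: mem_M0_iff)
  then have "l1_dist p p' \<le> 2" unfolding l1_dist_def by linarith
  ultimately have "l1_dist p p' = min 2 (l1_dist (grid_pos n q) (grid_pos n' q') / 3)" by simp
  also have "\<dots> \<le> qd X d S (n, S q) (n', S q')"
    using rep rep' by (intro qd_ge_l1_dist)
  finally show ?thesis using rep rep' S_in by (simp add: tensor_dist_tclass)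
qed

lemma tensor_dist_S_le_same_copy:
  assumes "p \<in> M0" "p' \<in> M0" "n \<in> NN" "q \<in> M0" "q' \<in> M0"
    and "grid_pos n q = (3 * fst p, 3 * snd p)" "grid_pos n q' = (3 * fst p', 3 * snd p')"
  shows "tensor_dist X d S (tensor_S X S p) (tensor_S X S p') \<le> d (S q) (S q') / 3"
proof -
  have "tensor_dist X d S (tensor_S X S p) (tensor_S X S p') = qd X d S (n, S q) (n, S q')"
    using assms S_in by (simp add: tensor_S_eq tensor_dist_tclass)
  also have "\<dots> \<le> tstep X d S (n, S q) (n, S q')"
    using assms S_in by (intro qd_le_tstep) auto
  also have "\<dots> \<le> d (S q) (S q') / 3"
    by (simp add: tstep_def)
  finally show ?thesis .
qed

lemma tensor_dist_S_vertical_le: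
  assumes i: "i \<in> {0, 1}" and "r \<in> {0..1}" "s \<in> {0..1}"
  shows "tensor_dist X d S (tensor_S X S (i, r)) (tensor_S X S (i, s)) \<le> \<bar>s - r\<bar>"
proof -
  have "\<forall>r\<in>{0..1}. \<forall>s\<in>{0..1}. tensor_dist X d S (tensor_S X S (i, r)) (tensor_S X S (i, s)) \<le> \<bar>s - r\<bar>"
  proof (rule Metric_space.short_path_thirds[OF tensor_metric])
    show "(\<lambda>t. tensor_S X S (i, t)) ` {0..1} \<subseteq> tensor X S"
      using i by (auto intro!: tensor_S_in simp: mem_M0_iff)
  next
    fix k :: nat and r s
    assume k: "k < 3" and r: "r \<in> {real k / 3..(real k + 1) / 3}" and s: "s \<in> {real k / 3..(real k + 1) / 3}"
    define n :: "int \<times> int" where "n = (if i = 0 then 0 else 2, int k)"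
    have "tensor_dist X d S (tensor_S X S (i, r)) (tensor_S X S (i, s))
        \<le> d (S (i, 3 * r - k)) (S (i, 3 * s - k)) / 3"
      by (rule tensor_dist_S_le_same_copy[of _ _ n])
        (use i k r s in \<open>auto simp: n_def grid_pos_def mem_M0_iff mem_NN_iff\<close>)
    also have "\<dots> = \<bar>s - r\<bar>"
      using dist_S_vertical[of i "3 * r - k" "3 * s - k"] i r s by (simp add: abs_if)
    finally show "tensor_dist X d S (tensor_S X S (i, r)) (tensor_S X S (i, s)) \<le> \<bar>s - r\<bar>" .
  qed
  then show ?thesis using assms by blast
qed

lemma tensor_dist_S_horizontal_le:
  assumes i: "i \<in> {0, 1}" and "r \<in> {0..1}" "s \<in> {0..1}"
  shows "tensor_dist X d S (tensor_S X S (r, i)) (tensor_S X S (s, i)) \<le> \<bar>s - r\<bar>"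
proof -
  have "\<forall>r\<in>{0..1}. \<forall>s\<in>{0..1}. tensor_dist X d S (tensor_S X S (r, i)) (tensor_S X S (s, i)) \<le> \<bar>s - r\<bar>"
  proof (rule Metric_space.short_path_thirds[OF tensor_metric])
    show "(\<lambda>t. tensor_S X S (t, i)) ` {0..1} \<subseteq> tensor X S"
      using i by (auto intro!: tensor_S_in simp: mem_M0_iff)
  next
    fix k :: nat and r s
    assume k: "k < 3" and r: "r \<in> {real k / 3..(real k + 1) / 3}" and s: "s \<in> {real k / 3..(real k + 1) / 3}"
    define n :: "int \<times> int" where "n = (int k, if i = 0 then 0 else 2)"
    have "tensor_dist X d S (tensor_S X S (r, i)) (tensor_S X S (s, i))
        \<le> d (S (3 * r - k, i)) (S (3 * s - k, i)) / 3"
      by (rule tensor_dist_S_le_same_copy[of _ _ n])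
        (use i k r s in \<open>auto simp: n_def grid_pos_def mem_M0_iff mem_NN_iff\<close>)
    also have "\<dots> = \<bar>s - r\<bar>"
      using dist_S_horizontal[of i "3 * r - k" "3 * s - k"] i r s by (simp add: abs_if)
    finally show "tensor_dist X d S (tensor_S X S (r, i)) (tensor_S X S (s, i)) \<le> \<bar>s - r\<bar>" .
  qed
  then show ?thesis using assms by blast
qed

lemma tensor_dist_le_2:
  assumes "A \<in> tensor X S" "B \<in> tensor X S"
  shows "tensor_dist X d S A B \<le> 2"
proof -
  obtain a b where "a \<in> NN \<times> X" "b \<in> NN \<times> X" "A = tclass X S a" "B = tclass X S b"
    using assms by (metis tensor_obtain_tclass)
  then show ?thesis
    using qd_le_tstep[of a b] tstep_le_2[of a b] by (simp add: tensor_dist_tclass)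
qed

lemma tensor_square_ms: "square_ms (tensor X S) (tensor_dist X d S) (tensor_S X S)"
proof -
  have "tensor_dist X d S (tensor_S X S (i, r)) (tensor_S X S (i, s)) = \<bar>s - r\<bar> \<and>
      tensor_dist X d S (tensor_S X S (r, i)) (tensor_S X S (s, i)) = \<bar>s - r\<bar>"
    if "i \<in> {0, 1}" "r \<in> {0..1}" "s \<in> {0..1}" for i r s
  proof -
    have "(i, r) \<in> M0" "(i, s) \<in> M0" "(r, i) \<in> M0" "(s, i) \<in> M0"
      using that by (auto simp: mem_M0_iff)
    then have "\<bar>s - r\<bar> \<le> tensor_dist X d S (tensor_S X S (i, r)) (tensor_S X S (i, s))"
      "\<bar>s - r\<bar> \<le> tensor_dist X d S (tensor_S X S (r, i)) (tensor_S X S (s, i))"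
      using l1_dist_le_tensor_dist_S[of "(i, r)" "(i, s)"] l1_dist_le_tensor_dist_S[of "(r, i)" "(s, i)"]
      by (simp_all add: l1_dist_def abs_minus_commute)
    then show ?thesis
      using tensor_dist_S_vertical_le[OF that] tensor_dist_S_horizontal_le[OF that] by linarith
  qed
  then show ?thesis
    unfolding square_ms_def l1_dist_def[symmetric]
    using tensor_metric tensor_dist_le_2 tensor_S_in inj_on_tensor_S l1_dist_le_tensor_dist_S by blast
qed

end

section \<open>Functoriality\<close>

lemma tensor_map_eq_apsnd: "tensor_map Y T f A = tclass Y T (apsnd f (SOME a. a \<in> A))"
  by (cases "SOME a. a \<in> A") (simp add: tensor_map_def)

locale square_ms_morphism =
  X: square_metric_space X d S + Y: square_metric_space Y e T
  for X :: "'a set" and d S and Y :: "'b set" and e T +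
  fixes f :: "'a \<Rightarrow> 'b"
  assumes sqms_mor: "sqms_mor X d S Y e T f"
begin

lemma apsnd_in: "u \<in> NN \<times> X \<Longrightarrow> apsnd f u \<in> NN \<times> Y"
  using sqms_mor by (auto simp: sqms_mor_def)

lemma f_short: "x \<in> X \<Longrightarrow> y \<in> X \<Longrightarrow> e (f x) (f y) \<le> d x y"
  using sqms_mor by (simp add: sqms_mor_def)

lemma f_S: "p \<in> M0 \<Longrightarrow> f (S p) = T p"
  using sqms_mor by (simp add: sqms_mor_def)

lemma teq_apsnd:
  assumes "(u, v) \<in> teq X S"
  shows "(apsnd f u, apsnd f v) \<in> teq Y T"
proof -
  have "u \<in> NN \<times> X" "u = v \<or> X.glued u v" using assms by (simp_all add: X.teq_iff)
  then consider "u = v" | m n p q where "m \<in> NN" "n \<in> NN" "p \<in> M0" "q \<in> M0"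
    "u = (m, S p)" "v = (n, S q)" "grid_pos m p = grid_pos n q"
    unfolding X.glued_def by blast
  then show ?thesis
  proof cases
    case 1
    then show ?thesis using apsnd_in \<open>u \<in> NN \<times> X\<close> Y.teq_refl by simp
  next
    case 2
    then show ?thesis using Y.teq_S_iff f_S by simp
  qed
qed

lemma tensor_map_tclass:
  assumes "a \<in> NN \<times> X"
  shows "tensor_map Y T f (tclass X S a) = tclass Y T (apsnd f a)"
proof -
  have "a \<in> tclass X S a" using assms X.teq_refl by (simp add: X.mem_tclass_iff)
  then have "(a, SOME a'. a' \<in> tclass X S a) \<in> teq X S"
    by (metis someI X.mem_tclass_iff)
  then have "(apsnd f a, apsnd f (SOME a'. a' \<in> tclass X S a)) \<in> teq Y T"
    by (rule teq_apsnd)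
  then have "tclass Y T (apsnd f a) = tclass Y T (apsnd f (SOME a'. a' \<in> tclass X S a))"
    using Y.teq_in by (simp add: Y.tclass_eq_iff)
  then show ?thesis by (simp add: tensor_map_eq_apsnd)
qed

lemma tensor_map_in:
  assumes "A \<in> tensor X S"
  shows "tensor_map Y T f A \<in> tensor Y T"
proof -
  obtain a where "a \<in> NN \<times> X" "A = tclass X S a"
    using assms by (rule X.tensor_obtain_tclass)
  then show ?thesis using apsnd_in Y.tclass_in_tensor by (simp add: tensor_map_tclass)
qed

lemma tstep_apsnd_le:
  assumes u: "u \<in> NN \<times> X" and v: "v \<in> NN \<times> X"
  shows "tstep Y e T (apsnd f u) (apsnd f v) \<le> tstep X d S u v"
proof (cases "(u, v) \<in> teq X S")
  case True
  then show ?thesis using teq_apsnd X.tstep_nonneg by (simp add: tstep_def)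
next
  case False
  show ?thesis
  proof (cases "fst u = fst v")
    case True
    have "tstep Y e T (apsnd f u) (apsnd f v) \<le> e (f (snd u)) (f (snd v)) / 3"
      using True by (simp add: tstep_def)
    also have "\<dots> \<le> d (snd u) (snd v) / 3"
      using f_short u v by (simp add: mem_Times_iff)
    finally show ?thesis using False True by (simp add: tstep_def)
  next
    case different_copies: False
    then show ?thesis
      using False Y.tstep_le_2 apsnd_in u v by (simp add: tstep_def)
  qed
qed

lemma tcost_map_apsnd_le: "set zs \<subseteq> NN \<times> X \<Longrightarrow> tcost Y e T (map (apsnd f) zs) \<le> tcost X d S zs"
proof (induction zs rule: induct_list012)
  case (3 x y zs)
  then show ?case using tstep_apsnd_le[of x y] by simp
qed simp_all

lemma qd_apsnd_le:
  assumes a: "a \<in> NN \<times> X" and b: "b \<in> NN \<times> X"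
  shows "qd Y e T (apsnd f a) (apsnd f b) \<le> qd X d S a b"
proof (rule X.qd_greatest[OF a b])
  fix zs assume zs: "X.chain_between a b zs"
  then have "Y.chain_between (apsnd f a) (apsnd f b) (map (apsnd f) zs)"
    using apsnd_in by (auto simp: X.chain_between_def Y.chain_between_def hd_map last_map)
  then have "qd Y e T (apsnd f a) (apsnd f b) \<le> tcost Y e T (map (apsnd f) zs)"
    by (rule Y.qd_le_tcost)
  also have "\<dots> \<le> tcost X d S zs"
    using zs tcost_map_apsnd_le by (simp add: X.chain_between_def)
  finally show "qd Y e T (apsnd f a) (apsnd f b) \<le> tcost X d S zs" .
qed

lemma tensor_map_short:
  assumes "A \<in> tensor X S" "B \<in> tensor X S"
  shows "tensor_dist Y e T (tensor_map Y T f A) (tensor_map Y T f B) \<le> tensor_dist X d S A B"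
proof -
  obtain a b where "a \<in> NN \<times> X" "b \<in> NN \<times> X" "A = tclass X S a" "B = tclass X S b"
    using assms by (metis X.tensor_obtain_tclass)
  then show ?thesis
    using qd_apsnd_le apsnd_in by (simp add: tensor_map_tclass X.tensor_dist_tclass Y.tensor_dist_tclass)
qed

lemma tensor_map_tensor_S:
  assumes "p \<in> M0"
  shows "tensor_map Y T f (tensor_S X S p) = tensor_S Y T p"
proof -
  obtain n q where rep: "n \<in> NN" "q \<in> M0" "grid_pos n q = (3 * fst p, 3 * snd p)"
    "tensor_S X S p = tclass X S (n, S q)"
    using X.tensor_S_obtain_rep[OF assms] .
  then have "tensor_map Y T f (tensor_S X S p) = tclass Y T (n, T q)"
    using X.S_in f_S by (simp add: tensor_map_tclass)
  also have "\<dots> = tensor_S Y T p"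
    using Y.tensor_S_eq[OF assms rep(1-3)] by simp
  finally show ?thesis .
qed

lemma tensor_map_sqms_mor:
  "sqms_mor (tensor X S) (tensor_dist X d S) (tensor_S X S)
     (tensor Y T) (tensor_dist Y e T) (tensor_S Y T) (tensor_map Y T f)"
  unfolding sqms_mor_def using tensor_map_in tensor_map_short tensor_map_tensor_S by blast

end

lemma square_ms_morphismI:
  "square_ms X d S \<Longrightarrow> square_ms Y e T \<Longrightarrow> sqms_mor X d S Y e T f \<Longrightarrow>
    square_ms_morphism X d S Y e T f"
  by (simp add: square_ms_morphism_def square_ms_morphism_axioms_def square_metric_space_def)

lemma sqms_mor_id: "sqms_mor X d S X d S id"
  by (simp add: sqms_mor_def)

lemma sqms_mor_comp:
  assumes "sqms_mor X d S Y e T f" "sqms_mor Y e T Z h U g"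
  shows "sqms_mor X d S Z h U (g \<circ> f)"
proof -
  have "h (g (f x)) (g (f y)) \<le> d x y" if "x \<in> X" "y \<in> X" for x y
    using assms that unfolding sqms_mor_def by (meson image_subset_iff order_trans)
  then show ?thesis using assms unfolding sqms_mor_def by (auto simp: image_subset_iff)
qed

lemma tensor_map_id:
  assumes "square_ms X d S" "A \<in> tensor X S"
  shows "tensor_map X S id A = A"
proof -
  interpret square_ms_morphism X d S X d S id
    using assms(1) assms(1) sqms_mor_id by (rule square_ms_morphismI)
  obtain a where "a \<in> NN \<times> X" "A = tclass X S a"
    using assms(2) by (rule X.tensor_obtain_tclass)
  then show ?thesis by (simp add: tensor_map_tclass)
qed

lemma tensor_map_comp:
  assumes "square_ms X d S" "square_ms Y e T" "square_ms Z h U"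
    and "sqms_mor X d S Y e T f" "sqms_mor Y e T Z h U g" and "A \<in> tensor X S"
  shows "tensor_map Z U (g \<circ> f) A = tensor_map Z U g (tensor_map Y T f A)"
proof -
  interpret f: square_ms_morphism X d S Y e T f
    using assms(1,2,4) by (rule square_ms_morphismI)
  interpret g: square_ms_morphism Y e T Z h U g
    using assms(2,3,5) by (rule square_ms_morphismI)
  interpret gf: square_ms_morphism X d S Z h U "g \<circ> f"
    using assms(1,3) sqms_mor_comp[OF assms(4,5)] by (rule square_ms_morphismI)
  obtain a where "a \<in> NN \<times> X" "A = tclass X S a"
    using assms(6) by (rule f.X.tensor_obtain_tclass)
  then show ?thesis
    using f.apsnd_in by (simp add: f.tensor_map_tclass g.tensor_map_tclass gf.tensor_map_tclass apsnd_compose)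
qed

theorem mainTheorem11:
  shows "(\<forall>(X :: 'a set) d S. square_ms X d S \<longrightarrow>
            Metric_space (tensor X S) (tensor_dist X d S) \<and>
            square_ms (tensor X S) (tensor_dist X d S) (tensor_S X S)) \<and>
         (\<forall>(X :: 'a set) d S (Y :: 'b set) e T f.
            square_ms X d S \<and> square_ms Y e T \<and> sqms_mor X d S Y e T f \<longrightarrow>
            sqms_mor (tensor X S) (tensor_dist X d S) (tensor_S X S)
                     (tensor Y T) (tensor_dist Y e T) (tensor_S Y T) (tensor_map Y T f)) \<and>
         (\<forall>(X :: 'a set) d S. square_ms X d S \<longrightarrow>
            (\<forall>A\<in>tensor X S. tensor_map X S id A = A)) \<and>
         (\<forall>(X :: 'a set) d S (Y :: 'b set) e T (Z :: 'c set) h U f g.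
            square_ms X d S \<and> square_ms Y e T \<and> square_ms Z h U \<and>
            sqms_mor X d S Y e T f \<and> sqms_mor Y e T Z h U g \<longrightarrow>
            (\<forall>A\<in>tensor X S. tensor_map Z U (g \<circ> f) A = tensor_map Z U g (tensor_map Y T f A)))"
proof (intro conjI allI impI ballI)
  fix X :: "'a set" and d S
  assume "square_ms X d S"
  then interpret square_metric_space X d S
    by (rule square_metric_space.intro)
  show "Metric_space (tensor X S) (tensor_dist X d S)" by (rule tensor_metric)
  show "square_ms (tensor X S) (tensor_dist X d S) (tensor_S X S)" by (rule tensor_square_ms)
next
  fix X :: "'a set" and d S and Y :: "'b set" and e T f
  assume "square_ms X d S \<and> square_ms Y e T \<and> sqms_mor X d S Y e T f"
  then interpret square_ms_morphism X d S Y e T f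
    by (blast intro: square_ms_morphismI)
  show "sqms_mor (tensor X S) (tensor_dist X d S) (tensor_S X S)
      (tensor Y T) (tensor_dist Y e T) (tensor_S Y T) (tensor_map Y T f)"
    by (rule tensor_map_sqms_mor)
next
  fix X :: "'a set" and d S A
  assume "square_ms X d S" "A \<in> tensor X S"
  then show "tensor_map X S id A = A" by (rule tensor_map_id)
next
  fix X :: "'a set" and d S and Y :: "'b set" and e T and Z :: "'c set" and h U f g A
  assume "square_ms X d S \<and> square_ms Y e T \<and> square_ms Z h U \<and>
    sqms_mor X d S Y e T f \<and> sqms_mor Y e T Z h U g" and "A \<in> tensor X S"
  then show "tensor_map Z U (g \<circ> f) A = tensor_map Z U g (tensor_map Y T f A)"
    by (intro tensor_map_comp) auto
qed

end
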